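(* Let $(A,\rho,[-,-])$ be a Lie algebroid and let $\nabla^{(1)},\nabla^{(2)},\nabla^{(3)}$ be flat linear connections on $(A,\rho)$, i.e. $R_{\nabla^{(i)}}=0$ for $i=1,2,3$. Then for all $u,v,w\in\underline{\mathrm{Sec}}(A)$, $$R_{[\nabla^{(1)},\nabla^{(2)},\nabla^{(3)}]}(u,v)w=2\nabla^{(2)}_{[u,v]}w+\sum_{i\neq j}(-1)^{i+j}[\nabla^{(i)}_u,\nabla^{(j)}_v]w,$$ where $[\nabla^{(1)},\nabla^{(2)},\nabla^{(3)}]:=\nabla^{(1)}-\nabla^{(2)}+\nabla^{(3)}$, the sum runs over ordered pairs $(i,j)$ with $i,j\in\{1,2,3\}$, $i\neq j$, and $[\nabla^{(i)}_u,\nabla^{(j)}_v]w:=\nabla^{(i)}_u\nabla^{(j)}_v w-(-1)^{\widetilde u\widetilde v}\nabla^{(j)}_v\nabla^{(i)}_u w$.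
   Context: All objects are $\mathbb{Z}_2$-graded (supergeometry); the Grassmann parity of an object $x$ is denoted $\widetilde{x}\in\mathbb{Z}_2$. An anchored vector bundle is a vector bundle $\pi: A\to M$ of supermanifolds with a vector bundle homomorphism over the identity $\rho: A\to\mathsf{T}M$; it induces an even $C^\infty(M)$-module map $\rho:\underline{\mathrm{Sec}}(A)\to\mathrm{Vect}(M)$, $\rho_u:=\rho(u)$. A Lie algebroid is an anchored vector bundle together with an $\mathbb{R}$-bilinear bracket $[-,-]$ on $\underline{\mathrm{Sec}}(A)$ such that $\widetilde{[u,v]}=\widetilde u+\widetilde v$, $[u,v]=-(-1)^{\widetilde u\widetilde v}[v,u]$, $[u,fv]=\rho_u(f)v+(-1)^{\widetilde u\widetilde f}f[u,v]$, and $[u,[v,w]]=[[u,v],w]+(-1)^{\widetilde u\widetilde v}[v,[u,w]]$ for all sections $u,v,w$ and $f\in C^\infty(M)$. A linear connection on $(A,\rho)$ is an $\mathbb{R}$-bilinear map $\nabla:\underline{\mathrm{Sec}}(A)\times\underline{\mathrm{Sec}}(A)\to\underline{\mathrm{Sec}}(A)$ with $\widetilde{\nabla_u v}=\widetilde u+\widetilde v$, $\nabla_{fu}v=f\nabla_u v$, and $\nabla_u(fv)=\rho_u(f)v+(-1)^{\widetilde u\widetilde f}f\nabla_u v$. The curvature of $\nabla$ is $R_\nabla(u,v)w:=\nabla_u\nabla_v w-(-1)^{\widetilde u\widetilde v}\nabla_v\nabla_u w-\nabla_{[u,v]}w$. *)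

theory Defs
  imports Main "HOL.Real_Vector_Spaces"
begin

text \<open>Algebraic model: C(M) is a Z2-graded real algebra 'f with homogeneous parts
  GF False (even) and GF True (odd); sections form a Z2-graded real vector space 's
  with homogeneous parts GS False, GS True, and a left C(M)-module action sm.\<close>

definition sgn2 :: "bool \<Rightarrow> bool \<Rightarrow> real" where
  "sgn2 a b = (if a \<and> b then -1 else 1)"

definition graded_space :: "(bool \<Rightarrow> 'a::real_vector set) \<Rightarrow> bool" where
  "graded_space G \<longleftrightarrow>
     (\<forall>a. 0 \<in> G a \<and> (\<forall>x\<in>G a. \<forall>y\<in>G a. x + y \<in> G a) \<and> (\<forall>c. \<forall>x\<in>G a. c *\<^sub>R x \<in> G a))
   \<and> G False \<inter> G True = {0}
   \<and> (\<forall>x. \<exists>xe xo. xe \<in> G False \<and> xo \<in> G True \<and> x = xe + xo)"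

definition supercomm_algebra :: "(bool \<Rightarrow> 'f::real_algebra_1 set) \<Rightarrow> bool" where
  "supercomm_algebra GF \<longleftrightarrow> graded_space GF \<and> 1 \<in> GF False
   \<and> (\<forall>a b. \<forall>f\<in>GF a. \<forall>g\<in>GF b. f * g \<in> GF (a \<noteq> b) \<and> f * g = sgn2 a b *\<^sub>R (g * f))"

definition graded_module ::
  "(bool \<Rightarrow> 'f::real_algebra_1 set) \<Rightarrow> (bool \<Rightarrow> 's::real_vector set) \<Rightarrow> ('f \<Rightarrow> 's \<Rightarrow> 's) \<Rightarrow> bool" where
  "graded_module GF GS sm \<longleftrightarrow> supercomm_algebra GF \<and> graded_space GS
   \<and> (\<forall>s. sm 1 s = s)
   \<and> (\<forall>f g s. sm (f * g) s = sm f (sm g s))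
   \<and> (\<forall>f g s. sm (f + g) s = sm f s + sm g s)
   \<and> (\<forall>f s t. sm f (s + t) = sm f s + sm f t)
   \<and> (\<forall>c f s. sm (c *\<^sub>R f) s = c *\<^sub>R sm f s \<and> sm f (c *\<^sub>R s) = c *\<^sub>R sm f s)
   \<and> (\<forall>a b. \<forall>f\<in>GF a. \<forall>s\<in>GS b. sm f s \<in> GS (a \<noteq> b))"

text \<open>Anchor: an even C(M)-linear map from sections to vector fields, i.e. to
  graded derivations of C(M) (a section of parity a goes to a derivation of parity a).\<close>
definition anchor ::
  "(bool \<Rightarrow> 'f::real_algebra_1 set) \<Rightarrow> (bool \<Rightarrow> 's::real_vector set) \<Rightarrow> ('f \<Rightarrow> 's \<Rightarrow> 's)
   \<Rightarrow> ('s \<Rightarrow> 'f \<Rightarrow> 'f) \<Rightarrow> bool" where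
  "anchor GF GS sm rho \<longleftrightarrow>
     (\<forall>u v f. rho (u + v) f = rho u f + rho v f)
   \<and> (\<forall>g u f. rho (sm g u) f = g * rho u f)
   \<and> (\<forall>u f g. rho u (f + g) = rho u f + rho u g)
   \<and> (\<forall>u c f. rho u (c *\<^sub>R f) = c *\<^sub>R rho u f)
   \<and> (\<forall>a b. \<forall>u\<in>GS a. \<forall>f\<in>GF b. rho u f \<in> GF (a \<noteq> b)
        \<and> (\<forall>g. rho u (f * g) = rho u f * g + sgn2 a b *\<^sub>R (f * rho u g)))"

definition lie_algebroid ::
  "(bool \<Rightarrow> 'f::real_algebra_1 set) \<Rightarrow> (bool \<Rightarrow> 's::real_vector set) \<Rightarrow> ('f \<Rightarrow> 's \<Rightarrow> 's)
   \<Rightarrow> ('s \<Rightarrow> 'f \<Rightarrow> 'f) \<Rightarrow> ('s \<Rightarrow> 's \<Rightarrow> 's) \<Rightarrow> bool" where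
  "lie_algebroid GF GS sm rho br \<longleftrightarrow> graded_module GF GS sm \<and> anchor GF GS sm rho
   \<and> (\<forall>u v w. br (u + v) w = br u w + br v w \<and> br u (v + w) = br u v + br u w)
   \<and> (\<forall>c u v. br (c *\<^sub>R u) v = c *\<^sub>R br u v \<and> br u (c *\<^sub>R v) = c *\<^sub>R br u v)
   \<and> (\<forall>a b. \<forall>u\<in>GS a. \<forall>v\<in>GS b. br u v \<in> GS (a \<noteq> b))
   \<and> (\<forall>a b. \<forall>u\<in>GS a. \<forall>v\<in>GS b. br u v = - (sgn2 a b *\<^sub>R br v u))
   \<and> (\<forall>a c. \<forall>u\<in>GS a. \<forall>f\<in>GF c. \<forall>v.
        br u (sm f v) = sm (rho u f) v + sgn2 a c *\<^sub>R sm f (br u v))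
   \<and> (\<forall>a b. \<forall>u\<in>GS a. \<forall>v\<in>GS b. \<forall>w.
        br u (br v w) = br (br u v) w + sgn2 a b *\<^sub>R br v (br u w))"

definition linear_connection ::
  "(bool \<Rightarrow> 'f::real_algebra_1 set) \<Rightarrow> (bool \<Rightarrow> 's::real_vector set) \<Rightarrow> ('f \<Rightarrow> 's \<Rightarrow> 's)
   \<Rightarrow> ('s \<Rightarrow> 'f \<Rightarrow> 'f) \<Rightarrow> ('s \<Rightarrow> 's \<Rightarrow> 's) \<Rightarrow> bool" where
  "linear_connection GF GS sm rho nabla \<longleftrightarrow>
     (\<forall>u v w. nabla (u + v) w = nabla u w + nabla v w \<and> nabla u (v + w) = nabla u v + nabla u w)
   \<and> (\<forall>c u v. nabla (c *\<^sub>R u) v = c *\<^sub>R nabla u v \<and> nabla u (c *\<^sub>R v) = c *\<^sub>R nabla u v)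
   \<and> (\<forall>a b. \<forall>u\<in>GS a. \<forall>v\<in>GS b. nabla u v \<in> GS (a \<noteq> b))
   \<and> (\<forall>f u v. nabla (sm f u) v = sm f (nabla u v))
   \<and> (\<forall>a c. \<forall>u\<in>GS a. \<forall>f\<in>GF c. \<forall>v.
        nabla u (sm f v) = sm (rho u f) v + sgn2 a c *\<^sub>R sm f (nabla u v))"

definition curvature ::
  "('s::real_vector \<Rightarrow> 's \<Rightarrow> 's) \<Rightarrow> ('s \<Rightarrow> 's \<Rightarrow> 's) \<Rightarrow> bool \<Rightarrow> bool \<Rightarrow> 's \<Rightarrow> 's \<Rightarrow> 's \<Rightarrow> 's" where
  "curvature br nabla a b u v w =
     nabla u (nabla v w) - sgn2 a b *\<^sub>R nabla v (nabla u w) - nabla (br u v) w"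

definition flat ::
  "(bool \<Rightarrow> 's::real_vector set) \<Rightarrow> ('s \<Rightarrow> 's \<Rightarrow> 's) \<Rightarrow> ('s \<Rightarrow> 's \<Rightarrow> 's) \<Rightarrow> bool" where
  "flat GS br nabla \<longleftrightarrow>
     (\<forall>a b. \<forall>u\<in>GS a. \<forall>v\<in>GS b. \<forall>w. curvature br nabla a b u v w = 0)"

definition conn_comm ::
  "('s::real_vector \<Rightarrow> 's \<Rightarrow> 's) \<Rightarrow> ('s \<Rightarrow> 's \<Rightarrow> 's) \<Rightarrow> bool \<Rightarrow> bool \<Rightarrow> 's \<Rightarrow> 's \<Rightarrow> 's \<Rightarrow> 's" where
  "conn_comm n1 n2 a b u v w = n1 u (n2 v w) - sgn2 a b *\<^sub>R n2 v (n1 u w)"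

end

theory Submission
  imports Defs
begin

text \<open>For any linear combination of connections, nabla = sum_i c_i nabla_i, linearity of
  each nabla_i in its second argument expands the curvature as
  sum_(i,j) c_i c_j [nabla_i u, nabla_j v] - sum_i c_i nabla_i [u,v]. Flatness turns each diagonal commutator into
  nabla_i [u,v], leaving sum_i (c_i^2 - c_i) nabla_i [u,v] plus the off-diagonal terms.
  For c_i = (-1)^(i+1) we get c_i c_j = (-1)^(i+j), and c_i^2 - c_i is 2 for i = 2 and 0
  for i = 1, 3.\<close>

lemma linear_connection_linear:
  assumes "linear_connection GF GS sm rho nabla"
  shows "linear (nabla u)"
  using assms unfolding linear_connection_def by (intro linearI) blast+

lemma flat_conn_comm_self:
  assumes "flat GS br nabla" and "u \<in> GS a" and "v \<in> GS b"
  shows "conn_comm nabla nabla a b u v w = nabla (br u v) w"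
  using assms unfolding flat_def curvature_def conn_comm_def by (metis eq_iff_diff_eq_0)

lemma curvature_sum_connections:
  assumes "finite I" and "\<And>i x. i \<in> I \<Longrightarrow> linear (N i x)"
  shows "curvature br (\<lambda>x y. \<Sum>i\<in>I. c i *\<^sub>R N i x y) a b u v w =
           (\<Sum>i\<in>I. \<Sum>j\<in>I. (c i * c j) *\<^sub>R conn_comm (N i) (N j) a b u v w)
         - (\<Sum>i\<in>I. c i *\<^sub>R N i (br u v) w)"
proof -
  have expand: "N i x (\<Sum>j\<in>I. c j *\<^sub>R N j y z) = (\<Sum>j\<in>I. c j *\<^sub>R N i x (N j y z))"
    if "i \<in> I" for i x y z
    using assms(2)[OF that] by (simp add: linear_sum linear_scale)
  have uv_terms: "(\<Sum>i\<in>I. c i *\<^sub>R N i u (\<Sum>j\<in>I. c j *\<^sub>R N j v w))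
        = (\<Sum>i\<in>I. \<Sum>j\<in>I. (c i * c j) *\<^sub>R N i u (N j v w))"
    by (simp add: expand scaleR_sum_right)
  have "(\<Sum>i\<in>I. c i *\<^sub>R N i v (\<Sum>j\<in>I. c j *\<^sub>R N j u w))
        = (\<Sum>i\<in>I. \<Sum>j\<in>I. (c i * c j) *\<^sub>R N i v (N j u w))"
    by (simp add: expand scaleR_sum_right)
  also have "\<dots> = (\<Sum>i\<in>I. \<Sum>j\<in>I. (c i * c j) *\<^sub>R N j v (N i u w))"
    by (subst sum.swap) (simp add: mult.commute)
  finally have vu_terms: "(\<Sum>i\<in>I. c i *\<^sub>R N i v (\<Sum>j\<in>I. c j *\<^sub>R N j u w))
        = (\<Sum>i\<in>I. \<Sum>j\<in>I. (c i * c j) *\<^sub>R N j v (N i u w))" .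
  show ?thesis
    unfolding curvature_def conn_comm_def uv_terms vu_terms
    by (simp add: scaleR_diff_right sum_subtractf scaleR_sum_right mult_ac)
qed

lemma sum_square_split_diagonal:
  assumes "finite I"
  shows "(\<Sum>i\<in>I. \<Sum>j\<in>I. f i j) =
           (\<Sum>i\<in>I. f i i) + (\<Sum>(i,j)\<in>{(i,j). i \<in> I \<and> j \<in> I \<and> i \<noteq> j}. f i j)"
proof -
  have "Sigma I (\<lambda>i. I - {i}) = {(i,j). i \<in> I \<and> j \<in> I \<and> i \<noteq> j}"
    by blast
  then have "(\<Sum>i\<in>I. \<Sum>j\<in>I - {i}. f i j) =
      (\<Sum>(i,j)\<in>{(i,j). i \<in> I \<and> j \<in> I \<and> i \<noteq> j}. f i j)"
    using assms by (simp add: sum.Sigma)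
  moreover have "(\<Sum>i\<in>I. \<Sum>j\<in>I. f i j) = (\<Sum>i\<in>I. f i i + (\<Sum>j\<in>I - {i}. f i j))"
    using assms by (intro sum.cong refl) (simp add: sum.remove)
  ultimately show ?thesis
    by (simp add: sum.distrib)
qed

lemma curvature_sum_flat_connections:
  assumes "finite I"
    and "\<And>i x. i \<in> I \<Longrightarrow> linear (N i x)"
    and "\<And>i. i \<in> I \<Longrightarrow> flat GS br (N i)"
    and "u \<in> GS a" and "v \<in> GS b"
  shows "curvature br (\<lambda>x y. \<Sum>i\<in>I. c i *\<^sub>R N i x y) a b u v w =
           (\<Sum>i\<in>I. (c i ^ 2 - c i) *\<^sub>R N i (br u v) w)
         + (\<Sum>(i,j)\<in>{(i,j). i \<in> I \<and> j \<in> I \<and> i \<noteq> j}.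
              (c i * c j) *\<^sub>R conn_comm (N i) (N j) a b u v w)"
proof -
  have "(\<Sum>i\<in>I. (c i * c i) *\<^sub>R conn_comm (N i) (N i) a b u v w)
        = (\<Sum>i\<in>I. (c i ^ 2) *\<^sub>R N i (br u v) w)"
    using flat_conn_comm_self[OF assms(3) assms(4,5)] by (simp add: power2_eq_square)
  then show ?thesis
    using assms(1,2)
    by (simp add: curvature_sum_connections sum_square_split_diagonal
        scaleR_diff_left sum_subtractf algebra_simps)
qed

theorem mainTheorem5:
  fixes GF :: "bool \<Rightarrow> 'f::real_algebra_1 set"
    and GS :: "bool \<Rightarrow> 's::real_vector set"
    and sm :: "'f \<Rightarrow> 's \<Rightarrow> 's"
    and rho :: "'s \<Rightarrow> 'f \<Rightarrow> 'f"
    and br :: "'s \<Rightarrow> 's \<Rightarrow> 's"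
    and N :: "nat \<Rightarrow> 's \<Rightarrow> 's \<Rightarrow> 's"
  assumes "lie_algebroid GF GS sm rho br"
    and "\<And>i. i \<in> {1,2,3} \<Longrightarrow> linear_connection GF GS sm rho (N i)"
    and "\<And>i. i \<in> {1,2,3} \<Longrightarrow> flat GS br (N i)"
    and "u \<in> GS a" and "v \<in> GS b"
  shows "curvature br (\<lambda>x y. N 1 x y - N 2 x y + N 3 x y) a b u v w =
           2 *\<^sub>R N 2 (br u v) w
         + (\<Sum>(i,j)\<in>{(i,j). i \<in> {1,2,3::nat} \<and> j \<in> {1,2,3} \<and> i \<noteq> j}.
              (-1::real) ^ (i + j) *\<^sub>R conn_comm (N i) (N j) a b u v w)"
proof -
  let ?c = "\<lambda>i::nat. (-1::real) ^ (i + 1)"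
  have "linear (N i x)" if "i \<in> {1,2,3}" for i x
    using assms(2)[OF that] by (rule linear_connection_linear)
  then have "curvature br (\<lambda>x y. \<Sum>i\<in>{1,2,3}. ?c i *\<^sub>R N i x y) a b u v w =
           (\<Sum>i\<in>{1,2,3}. (?c i ^ 2 - ?c i) *\<^sub>R N i (br u v) w)
         + (\<Sum>(i,j)\<in>{(i,j). i \<in> {1,2,3} \<and> j \<in> {1,2,3} \<and> i \<noteq> j}.
              (?c i * ?c j) *\<^sub>R conn_comm (N i) (N j) a b u v w)"
    using assms(3-5) by (intro curvature_sum_flat_connections) auto
  moreover have "(\<lambda>x y. \<Sum>i\<in>{1,2,3}. ?c i *\<^sub>R N i x y) = (\<lambda>x y. N 1 x y - N 2 x y + N 3 x y)"
    by (simp add: algebra_simps)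
  moreover have "(\<Sum>i\<in>{1,2,3}. (?c i ^ 2 - ?c i) *\<^sub>R N i (br u v) w) = 2 *\<^sub>R N 2 (br u v) w"
    by simp
  moreover have "?c i * ?c j = (-1) ^ (i + j)" for i j
    by (simp add: power_add)
  ultimately show ?thesis
    by simp
qed

end
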